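(* Let $\mathbb{H}=\mathbb{H}_S\oplus\mathbb{H}_R^1\oplus\cdots\oplus\mathbb{H}_R^{\mathbf{d}}$ ($\mathbf{d}\le d-1$) with orthogonal projections $\Pi_0,\Pi_1,\dots,\Pi_{\mathbf{d}}$ onto $\mathbb{H}_S,\mathbb{H}_R^1,\dots,\mathbb{H}_R^{\mathbf{d}}$. Fix $\mathbf{j}\in[m]$ and assume that $H_0$, $H_{\mathbf{j}}$, $L_{\mathbf{j}}$, $C_{\mathbf{j}}=\sum_{i=0}^{\mathbf{d}}c_i\Pi_i$ and $D_{\mathbf{j}}=\sum_{i=0}^{\mathbf{d}}a_i\Pi_i$ ($c_i,a_i\in\mathbb{C}$) are simultaneously block-diagonal with respect to this decomposition. Suppose at least one of $\underline c:=\min_{i\in[\mathbf{d}]}(\mathrm{Re}\,c_i-\mathrm{Re}\,c_0)^2>0$ or $\underline a:=\min_{i\in[\mathbf{d}]}(|a_i|-|a_0|)^2>0$ holds. Let $V(\rho)=\sum_{i=1}^{\mathbf{d}}\sqrt{\mathrm{Tr}(\Pi_i\rho)}$. Then: 1. there exist $c_1,c_2>0$ with $\mathbf{d}_0(\rho)/c_2\le V(\rho)\le\sqrt{\mathbf{d}_0(\rho)/c_1}$ for all $\rho\in\mathcal{S}(\mathbb{H})$; 2. there exists $\bar r>0$ such that for every $l\in(0,\bar r)$ there is $c(l)\in(0,(\underline c+\underline a)/2)$ with $\mathcal{A}_{\mathbf{j}}V(\rho)\le-c(l)V(\rho)$ for all $\rho\in\Lambda_l$. Consequently, there exist $\mu_1,\mu_2,\nu\in\mathcal{K}$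 and $l>0$ with $\mu_1(\mathbf{d}_0(\rho))\le V(\rho)\le\mu_2(\mathbf{d}_0(\rho))$ and $\mathcal{A}_{\mathbf{j}}V(\rho)\le-\nu(\mathbf{d}_0(\rho))$ on $\bar\Lambda_l$.
   Context: Quantum setting: $\mathbb{H}$ Hilbert space of finite dimension $d$, $\mathcal{S}(\mathbb{H})$ density matrices. For $C\in\mathcal{B}(\mathbb{H})$: $\mathcal{I}_C(A)=CAC^*-\tfrac12\{C^*C,A\}$, $v_C(A)=\mathrm{Tr}[CAC^*]$, $\mathcal{J}_C(A)=CAC^*/v_C(A)$. For $k\in[m]$, with self-adjoint $H_0,H_k$ and $L_k,C_k,D_k\in\mathcal{B}(\mathbb{H})$: $\mathcal{F}_k(A)=-{\rm i}[H_0+H_k,A]+\mathcal{I}_{L_k}(A)+\mathcal{I}_{C_k}(A)+\mathcal{I}_{D_k}(A)$, $\mathcal{G}_k(A)=C_kA+AC_k^*-\mathrm{Tr}[(C_k+C_k^* )A]A$, $\mathcal{H}_k(A)=\mathcal{J}_{D_k}(A)-A$. Generator of the $k$-th subsystem (SME ${\rm d}\rho=\mathcal{F}_k{\rm d}t+\mathcal{G}_k{\rm d}W+\int\mathcal{H}_k\mathbf{1}_{\{0\le x\le v_{D_k}\}}\tilde N$) on functions $V$ differentiable where needed: $\mathcal{A}_kV(\rho)=DV(\rho)[\mathcal{F}_k(\rho)]+\tfrac12D^2V(\rho)[\mathcal{G}_k(\rho),\mathcal{G}_k(\rho)]+\big(V(\mathcal{J}_{D_k}(\rho))-V(\rho)-DV(\rho)[\mathcal{H}_k(\rho)]\big)v_{D_k}(\rho)$.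 $\mathcal{I}(\mathbb{H}_S)=\{\rho\in\mathcal{S}(\mathbb{H}):\mathrm{Tr}(\Pi_0\rho)=1\}$, $\mathbf{d}_0(\rho)=\|\rho-\Pi_0\rho\Pi_0\|$ for a fixed matrix norm, $\Lambda_l=\{\rho\in\mathcal{S}(\mathbb{H}):\mathbf{d}_0(\rho)<l\}$, $\bar\Lambda_l$ its closure. $\mathcal{K}$: continuous non-decreasing $\mu:\mathbb{R}_+\to\mathbb{R}_+$, $\mu(0)=0$, $\mu(r)>0$ for $r>0$. *)

theory Defs
  imports "HOL-Analysis.Analysis"
begin

text \<open>Operators on the d-dimensional Hilbert space are complex d x d matrices,
  d = CARD('n).\<close>
type_synonym 'n op = "complex ^ 'n ^ 'n"

definition madj :: "'n::finite op \<Rightarrow> 'n op" where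
  "madj A = (\<chi> i j. cnj (A $ j $ i))"

definition mtr :: "'n::finite op \<Rightarrow> complex" where
  "mtr A = (\<Sum>i\<in>UNIV. A $ i $ i)"

definition cmult :: "complex \<Rightarrow> 'n::finite op \<Rightarrow> 'n op" where
  "cmult c A = (\<chi> i j. c * A $ i $ j)"

definition is_density :: "'n::finite op \<Rightarrow> bool" where
  "is_density \<rho> \<longleftrightarrow> madj \<rho> = \<rho> \<and>
     (\<forall>v::complex^'n. 0 \<le> Re (\<Sum>i\<in>UNIV. \<Sum>j\<in>UNIV. cnj (v $ i) * \<rho> $ i $ j * v $ j)) \<and>
     mtr \<rho> = 1"

definition is_op_norm :: "('n::finite op \<Rightarrow> real) \<Rightarrow> bool" where
  "is_op_norm N \<longleftrightarrow> (\<forall>A. 0 \<le> N A) \<and> (\<forall>A. N A = 0 \<longleftrightarrow> A = 0) \<and>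
     (\<forall>A B. N (A + B) \<le> N A + N B) \<and> (\<forall>c A. N (cmult c A) = cmod c * N A)"

definition diss :: "'n::finite op \<Rightarrow> 'n op \<Rightarrow> 'n op" where
  "diss C A = C ** A ** madj C - cmult (1/2) (madj C ** C ** A + A ** madj C ** C)"

definition vC :: "'n::finite op \<Rightarrow> 'n op \<Rightarrow> complex" where
  "vC C A = mtr (C ** A ** madj C)"

definition JC :: "'n::finite op \<Rightarrow> 'n op \<Rightarrow> 'n op" where
  "JC C A = cmult (1 / vC C A) (C ** A ** madj C)"

definition Fop :: "'n::finite op \<Rightarrow> 'n op \<Rightarrow> 'n op \<Rightarrow> 'n op \<Rightarrow> 'n op \<Rightarrow> 'n op \<Rightarrow> 'n op" where
  "Fop H0 H L C D A = cmult (- \<i>) ((H0 + H) ** A - A ** (H0 + H)) + diss L A + diss C A + diss D A"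

definition Gop :: "'n::finite op \<Rightarrow> 'n op \<Rightarrow> 'n op" where
  "Gop C A = C ** A + A ** madj C - cmult (mtr ((C + madj C) ** A)) A"

definition Hop :: "'n::finite op \<Rightarrow> 'n op \<Rightarrow> 'n op" where
  "Hop D A = JC D A - A"

text \<open>First and second derivative of V at rho in direction X
  (for differentiable V these are DV(rho)[X] and D^2V(rho)[X,X]).\<close>
definition DV :: "('n::finite op \<Rightarrow> real) \<Rightarrow> 'n op \<Rightarrow> 'n op \<Rightarrow> real" where
  "DV V \<rho> X = deriv (\<lambda>t. V (\<rho> + t *\<^sub>R X)) 0"

definition D2V :: "('n::finite op \<Rightarrow> real) \<Rightarrow> 'n op \<Rightarrow> 'n op \<Rightarrow> real" where
  "D2V V \<rho> X = deriv (deriv (\<lambda>t. V (\<rho> + t *\<^sub>R X))) 0"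

definition gen :: "'n::finite op \<Rightarrow> 'n op \<Rightarrow> 'n op \<Rightarrow> 'n op \<Rightarrow> 'n op \<Rightarrow>
    ('n op \<Rightarrow> real) \<Rightarrow> 'n op \<Rightarrow> real" where
  "gen H0 H L C D V \<rho> =
     DV V \<rho> (Fop H0 H L C D \<rho>) + 1/2 * D2V V \<rho> (Gop C \<rho>)
     + (V (JC D \<rho>) - V \<rho> - DV V \<rho> (Hop D \<rho>)) * Re (vC D \<rho>)"

definition classK :: "(real \<Rightarrow> real) \<Rightarrow> bool" where
  "classK \<mu> \<longleftrightarrow> continuous_on {0..} \<mu> \<and> mono_on {0..} \<mu> \<and> (\<forall>r\<ge>0. 0 \<le> \<mu> r)
     \<and> \<mu> 0 = 0 \<and> (\<forall>r>0. 0 < \<mu> r)"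

end

theory Submission
  imports Defs
begin

text \<open>Write p_i = Tr(Pi_i rho). All operators commute with the block projections and C, D
  are scalar on each block, so the drift leaves every p_i unchanged, the diffusion moves it by
  2 p_i (Re c_i - sum_l Re c_l p_l), and a jump rescales it to |a_i|^2 p_i / v with
  v = sum_l |a_l|^2 p_l. For V = sum_{i>=1} sqrt p_i this gives the closed form
    A V(rho) = -1/2 sum_{i>=1} sqrt p_i ((Re c_i - sum_l Re c_l p_l)^2 + (|a_i| - sqrt v)^2).
  If S = 1 - p_0 is small, the squared deviations of the two averages from Re c_0 and |a_0| are
  O(S), so every bracket is at least (c + a)/4 and A V <= -(c + a)/8 V.

  The comparison with d_0 goes through S: sqrt S <= V <= dd sqrt S; S is the trace of
  (1 - Pi_0)(rho - Pi_0 rho Pi_0), hence linear in rho - Pi_0 rho Pi_0; and Cauchy-Schwarz for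
  the positive form of rho bounds the entries of rho - Pi_0 rho Pi_0 by 3 sqrt S. All norms on
  the finite-dimensional operator space are equivalent.\<close>

lemma mtr_add [simp]: "mtr (A + B) = mtr A + mtr B"
  by (simp add: mtr_def sum.distrib)

lemma mtr_diff [simp]: "mtr (A - B) = mtr A - mtr B"
  by (simp add: mtr_def sum_subtractf)

lemma mtr_cmult [simp]: "mtr (cmult c A) = c * mtr A"
  by (simp add: mtr_def cmult_def sum_distrib_left)

lemma mtr_scaleR [simp]: "mtr (r *\<^sub>R A) = of_real r * mtr A"
  by (simp add: mtr_def sum_distrib_left scaleR_conv_of_real[where 'a = complex])

lemma mtr_sum: "finite S \<Longrightarrow> mtr (sum f S) = (\<Sum>i\<in>S. mtr (f i))"
  by (induction S rule: finite_induct) (simp_all add: mtr_def sum.distrib)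

lemma mtr_mult_commute: "mtr (A ** B) = mtr (B ** A)"
  unfolding mtr_def matrix_matrix_mult_def
  by (simp, subst sum.swap, simp add: mult.commute)

lemma mtr_madj: "mtr (madj A) = cnj (mtr A)"
  by (simp add: mtr_def madj_def)

lemma madj_mult: "madj (A ** B) = madj B ** madj A"
  by (simp add: madj_def matrix_matrix_mult_def vec_eq_iff mult.commute)

lemma madj_madj [simp]: "madj (madj A) = A"
  by (simp add: madj_def vec_eq_iff)

lemma madj_diff [simp]: "madj (A - B) = madj A - madj B"
  by (simp add: madj_def vec_eq_iff)

lemma madj_cmult [simp]: "madj (cmult c A) = cmult (cnj c) (madj A)"
  by (simp add: madj_def cmult_def vec_eq_iff)

lemma madj_sum: "finite S \<Longrightarrow> madj (sum f S) = (\<Sum>i\<in>S. madj (f i))"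
  by (induction S rule: finite_induct) (auto simp: madj_def vec_eq_iff)

lemma madj_mat1 [simp]: "madj (mat 1) = mat 1"
  by (simp add: madj_def mat_def vec_eq_iff)

lemma matrix_mul_cmult_left [simp]: "cmult c A ** B = cmult c (A ** B)"
  by (simp add: cmult_def matrix_matrix_mult_def vec_eq_iff sum_distrib_left mult.assoc)

lemma matrix_mul_cmult_right [simp]: "A ** cmult c B = cmult c (A ** B)"
  by (simp add: cmult_def matrix_matrix_mult_def vec_eq_iff sum_distrib_left mult.left_commute)

lemma matrix_add_rdistrib: "(A + B) ** C = A ** C + B ** (C::'n::finite op)"
  by (simp add: matrix_matrix_mult_def vec_eq_iff sum.distrib distrib_right)

lemma matrix_diff_rdistrib: "(A - B) ** C = A ** C - B ** (C::'n::finite op)"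
  by (simp add: matrix_matrix_mult_def vec_eq_iff sum_subtractf left_diff_distrib)

lemma matrix_diff_ldistrib: "C ** (A - B) = C ** A - C ** (B::'n::finite op)"
  by (simp add: matrix_matrix_mult_def vec_eq_iff sum_subtractf right_diff_distrib)

lemma matrix_mul_scaleR_right: "A ** (r *\<^sub>R B) = r *\<^sub>R (A ** (B::'n::finite op))"
  by (simp add: matrix_matrix_mult_def vec_eq_iff sum_distrib_left mult.left_commute
      scaleR_conv_of_real[where 'a = complex])

lemma matrix_sum_mul: "finite S \<Longrightarrow> sum f S ** (B::'n::finite op) = (\<Sum>i\<in>S. f i ** B)"
  by (induction S rule: finite_induct) (auto simp: matrix_add_rdistrib)

lemma matrix_mul_sum: "finite S \<Longrightarrow> (B::'n::finite op) ** sum f S = (\<Sum>i\<in>S. B ** f i)"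
  by (induction S rule: finite_induct) (auto simp: matrix_add_ldistrib)

lemma mtr_mult_add_right: "mtr (A ** (B + C)) = mtr (A ** B) + mtr (A ** C)"
  by (simp add: matrix_add_ldistrib)

lemma mtr_mult_cmult_right: "mtr (A ** cmult c B) = c * mtr (A ** B)"
  by simp

lemma cmult_zero [simp]: "cmult c 0 = 0"
  by (simp add: cmult_def vec_eq_iff)

lemma cmult_of_real: "cmult (of_real r) A = r *\<^sub>R A"
  by (simp add: cmult_def vec_eq_iff scaleR_conv_of_real[where 'a = complex])

locale orthogonal_resolution =
  fixes P :: "nat \<Rightarrow> 'n::finite op" and dd :: nat
  assumes P_herm: "\<forall>i\<le>dd. madj (P i) = P i"
    and P_idem: "\<forall>i\<le>dd. P i ** P i = P i"
    and P_orth: "\<forall>i\<le>dd. \<forall>k\<le>dd. i \<noteq> k \<longrightarrow> P i ** P k = 0"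
    and P_sum: "(\<Sum>i\<le>dd. P i) = mat 1"
begin

abbreviation weight :: "nat \<Rightarrow> 'n op \<Rightarrow> real" where
  "weight i \<rho> \<equiv> Re (mtr (P i ** \<rho>))"

abbreviation block_diag :: "(nat \<Rightarrow> complex) \<Rightarrow> 'n op" where
  "block_diag x \<equiv> \<Sum>l\<le>dd. cmult (x l) (P l)"

abbreviation lyap :: "'n op \<Rightarrow> real" where
  "lyap \<rho> \<equiv> \<Sum>i\<in>{1..dd}. sqrt (weight i \<rho>)"

lemma proj_mult_proj: "i \<le> dd \<Longrightarrow> k \<le> dd \<Longrightarrow> P i ** P k = (if i = k then P k else 0)"
  using P_idem P_orth by auto

lemma block_diag_mult_proj:
  assumes "k \<le> dd"
  shows "block_diag x ** P k = cmult (x k) (P k)"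
proof -
  have "block_diag x ** P k = (\<Sum>l\<le>dd. cmult (x l) (P l ** P k))"
    by (simp add: matrix_sum_mul)
  also have "\<dots> = (\<Sum>l\<le>dd. if l = k then cmult (x k) (P k) else 0)"
    by (rule sum.cong) (auto simp: proj_mult_proj assms)
  finally show ?thesis
    using assms by simp
qed

lemma proj_mult_block_diag:
  assumes "k \<le> dd"
  shows "P k ** block_diag x = cmult (x k) (P k)"
proof -
  have "P k ** block_diag x = (\<Sum>l\<le>dd. cmult (x l) (P k ** P l))"
    by (simp add: matrix_mul_sum)
  also have "\<dots> = (\<Sum>l\<le>dd. if l = k then cmult (x k) (P k) else 0)"
    by (rule sum.cong) (auto simp: proj_mult_proj assms)
  finally show ?thesis
    using assms by simp
qed

lemma madj_block_diag: "madj (block_diag x) = block_diag (\<lambda>l. cnj (x l))"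
  by (simp add: madj_sum P_herm)

lemma mtr_decompose: "mtr A = (\<Sum>k\<le>dd. mtr (P k ** A))"
proof -
  have "mtr A = mtr ((\<Sum>i\<le>dd. P i) ** A)"
    by (simp add: P_sum)
  then show ?thesis
    by (simp add: matrix_sum_mul mtr_sum)
qed

lemma Im_mtr_proj_herm:
  assumes "madj \<rho> = \<rho>" "k \<le> dd"
  shows "Im (mtr (P k ** \<rho>)) = 0"
proof -
  have "cnj (mtr (P k ** \<rho>)) = mtr (madj (P k ** \<rho>))"
    by (simp add: mtr_madj)
  also have "\<dots> = mtr (\<rho> ** P k)"
    using assms P_herm by (simp add: madj_mult)
  also have "\<dots> = mtr (P k ** \<rho>)"
    by (rule mtr_mult_commute)
  finally show ?thesis
    by (simp add: complex_eq_iff)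
qed

lemma commute_madj:
  assumes "k \<le> dd" "P k ** X = X ** P k"
  shows "P k ** madj X = madj X ** P k"
proof -
  have "P k ** madj X = madj (X ** P k)"
    using assms P_herm by (simp add: madj_mult)
  also have "\<dots> = madj X ** P k"
    using assms P_herm by (simp flip: assms(2) add: madj_mult)
  finally show ?thesis .
qed

lemma mtr_proj_diss:
  assumes "k \<le> dd" "P k ** X = X ** P k"
  shows "mtr (P k ** diss X \<rho>) = 0"
proof -
  have "mtr (P k ** (X ** \<rho> ** madj X)) = mtr (madj X ** (P k ** X ** \<rho>))"
    by (metis matrix_mul_assoc mtr_mult_commute)
  then have 1: "mtr (P k ** (X ** \<rho> ** madj X)) = mtr ((madj X ** X) ** (P k ** \<rho>))"
    using assms by (metis matrix_mul_assoc)
  have 2: "mtr (P k ** (madj X ** X ** \<rho>)) = mtr ((madj X ** X) ** (P k ** \<rho>))"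
    using assms commute_madj[OF assms] by (metis matrix_mul_assoc)
  have 3: "mtr (P k ** (\<rho> ** madj X ** X)) = mtr ((madj X ** X) ** (P k ** \<rho>))"
    by (metis matrix_mul_assoc mtr_mult_commute)
  show ?thesis
    unfolding diss_def by (simp add: matrix_diff_ldistrib matrix_add_ldistrib 1 2 3)
qed

lemma mtr_proj_mult_commute:
  assumes "P k ** H = H ** P k"
  shows "mtr (P k ** (\<rho> ** H)) = mtr (P k ** (H ** \<rho>))"
  using assms by (metis matrix_mul_assoc mtr_mult_commute)

lemma weight_Fop:
  assumes "\<forall>i\<le>dd. P i ** H0 = H0 ** P i" "\<forall>i\<le>dd. P i ** H = H ** P i"
    and "\<forall>i\<le>dd. P i ** L = L ** P i" and k: "k \<le> dd"
  shows "weight k (Fop H0 H L (block_diag c) (block_diag a) \<rho>) = 0"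
proof -
  have "P k ** (H0 + H) = (H0 + H) ** P k"
    using assms by (simp add: matrix_add_ldistrib matrix_add_rdistrib)
  then have "mtr (P k ** ((H0 + H) ** \<rho> - \<rho> ** (H0 + H))) = 0"
    using mtr_proj_mult_commute[of k "H0 + H" \<rho>] by (simp add: matrix_diff_ldistrib)
  moreover have "mtr (P k ** diss X \<rho>) = 0" if "X \<in> {L, block_diag c, block_diag a}" for X
    using that assms by (auto intro!: mtr_proj_diss simp: proj_mult_block_diag block_diag_mult_proj)
  ultimately show ?thesis
    unfolding Fop_def by (simp only: mtr_mult_add_right mtr_mult_cmult_right) simp
qed

lemma weight_Gop:
  assumes "madj \<rho> = \<rho>" "k \<le> dd"
  shows "weight k (Gop (block_diag c) \<rho>) =
    2 * weight k \<rho> * (Re (c k) - (\<Sum>l\<le>dd. Re (c l) * weight l \<rho>))"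
proof -
  let ?C = "block_diag c"
  have left: "mtr (P k ** (?C ** \<rho>)) = c k * mtr (P k ** \<rho>)"
    using proj_mult_block_diag[OF assms(2)] by (simp add: matrix_mul_assoc)
  have "mtr (P k ** (\<rho> ** M)) = mtr (M ** P k ** \<rho>)" for M
    by (metis matrix_mul_assoc mtr_mult_commute)
  then have right: "mtr (P k ** (\<rho> ** madj ?C)) = cnj (c k) * mtr (P k ** \<rho>)"
    using block_diag_mult_proj[OF assms(2)] by (simp add: madj_block_diag)
  have "Re (mtr (P l ** ((?C + madj ?C) ** \<rho>))) = 2 * Re (c l) * weight l \<rho>"
    if "l \<le> dd" for l
    using proj_mult_block_diag[OF that] Im_mtr_proj_herm[OF assms(1) that]
    by (simp add: matrix_add_ldistrib matrix_add_rdistrib matrix_mul_assoc madj_block_diag)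
  then have mean: "Re (mtr ((?C + madj ?C) ** \<rho>)) = (\<Sum>l\<le>dd. 2 * Re (c l) * weight l \<rho>)"
    by (subst mtr_decompose) (simp add: Re_sum)
  have "mtr (P k ** Gop ?C \<rho>) = c k * mtr (P k ** \<rho>) + cnj (c k) * mtr (P k ** \<rho>)
      - mtr ((?C + madj ?C) ** \<rho>) * mtr (P k ** \<rho>)"
    unfolding Gop_def
    by (simp only: matrix_add_ldistrib matrix_diff_ldistrib mtr_add mtr_diff mtr_mult_cmult_right
        left right)
  then have "weight k (Gop ?C \<rho>) = Re (c k * mtr (P k ** \<rho>) + cnj (c k) * mtr (P k ** \<rho>)
      - mtr ((?C + madj ?C) ** \<rho>) * mtr (P k ** \<rho>))"
    by (simp only:)
  also have "\<dots> = 2 * Re (c k) * weight k \<rho> - Re (mtr ((?C + madj ?C) ** \<rho>)) * weight k \<rho>"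
    using Im_mtr_proj_herm[OF assms] by simp
  finally show ?thesis
    by (simp add: mean sum_distrib_left algebra_simps)
qed

end

lemma sqrt_affine_has_derivative_near_0:
  fixes p g :: real
  assumes "0 \<le> p" "p = 0 \<Longrightarrow> g = 0"
  shows "\<forall>\<^sub>F t in nhds 0.
    ((\<lambda>t. sqrt (p + t * g)) has_real_derivative g / (2 * sqrt (p + t * g))) (at t)"
proof (cases "p = 0")
  case True
  then show ?thesis
    using assms by simp
next
  case False
  have "((\<lambda>t. p + t * g) \<longlongrightarrow> p + 0 * g) (nhds 0)"
    by (intro tendsto_intros filterlim_ident)
  then have "\<forall>\<^sub>F t in nhds 0. 0 < p + t * g"
    using assms False by (intro order_tendstoD(1)) auto
  then show ?thesis
    by (rule eventually_mono) (auto intro!: derivative_eq_intros simp: field_simps)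
qed

lemma sqrt_affine_second_derivative_at_0:
  fixes p g :: real
  assumes "0 \<le> p" "p = 0 \<Longrightarrow> g = 0"
  shows "((\<lambda>t. g / (2 * sqrt (p + t * g))) has_real_derivative
    - (g\<^sup>2 / (4 * p * sqrt p))) (at 0)"
proof (cases "p = 0")
  case True
  then show ?thesis
    using assms by simp
next
  case False
  then show ?thesis
    using assms by (auto intro!: derivative_eq_intros simp: field_simps power2_eq_square)
qed

lemma deriv_sum_sqrt_affine:
  fixes p g :: "nat \<Rightarrow> real"
  assumes "finite I" and "\<And>i. i \<in> I \<Longrightarrow> 0 \<le> p i"
    and "\<And>i. i \<in> I \<Longrightarrow> p i = 0 \<Longrightarrow> g i = 0"
  shows "deriv (\<lambda>t. \<Sum>i\<in>I. sqrt (p i + t * g i)) 0 = (\<Sum>i\<in>I. g i / (2 * sqrt (p i)))"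
    and "deriv (deriv (\<lambda>t. \<Sum>i\<in>I. sqrt (p i + t * g i))) 0
      = (\<Sum>i\<in>I. - ((g i)\<^sup>2 / (4 * p i * sqrt (p i))))"
proof -
  have "\<forall>\<^sub>F t in nhds 0. \<forall>i\<in>I.
    ((\<lambda>t. sqrt (p i + t * g i)) has_real_derivative g i / (2 * sqrt (p i + t * g i))) (at t)"
    using assms by (intro eventually_ball_finite ballI sqrt_affine_has_derivative_near_0) auto
  then have first: "\<forall>\<^sub>F t in nhds 0. deriv (\<lambda>t. \<Sum>i\<in>I. sqrt (p i + t * g i)) t
      = (\<Sum>i\<in>I. g i / (2 * sqrt (p i + t * g i)))"
    by (rule eventually_mono) (intro DERIV_imp_deriv DERIV_sum, auto)
  then show "deriv (\<lambda>t. \<Sum>i\<in>I. sqrt (p i + t * g i)) 0 = (\<Sum>i\<in>I. g i / (2 * sqrt (p i)))"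
    using eventually_nhds_x_imp_x by fastforce
  have "deriv (deriv (\<lambda>t. \<Sum>i\<in>I. sqrt (p i + t * g i))) 0
      = deriv (\<lambda>t. \<Sum>i\<in>I. g i / (2 * sqrt (p i + t * g i))) 0"
    by (rule deriv_cong_ev[OF first refl])
  also have "\<dots> = (\<Sum>i\<in>I. - ((g i)\<^sup>2 / (4 * p i * sqrt (p i))))"
    using assms by (intro DERIV_imp_deriv DERIV_sum sqrt_affine_second_derivative_at_0) auto
  finally show "deriv (deriv (\<lambda>t. \<Sum>i\<in>I. sqrt (p i + t * g i))) 0
      = (\<Sum>i\<in>I. - ((g i)\<^sup>2 / (4 * p i * sqrt (p i))))" .
qed

lemma sqrt_jump_remainder:
  fixes p v b :: real
  assumes "0 \<le> p" "0 < v" "0 \<le> b"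
  shows "v * (sqrt (b\<^sup>2 * p / v) - sqrt p - (b\<^sup>2 * p / v - p) / (2 * sqrt p))
    = - (1/2) * sqrt p * (b - sqrt v)\<^sup>2"
proof (cases "p = 0")
  case False
  have "w\<^sup>2 * (sqrt (b\<^sup>2 * s\<^sup>2 / w\<^sup>2) - s - (b\<^sup>2 * s\<^sup>2 / w\<^sup>2 - s\<^sup>2) / (2 * s))
      = - (1/2) * s * (b - w)\<^sup>2" if "0 < s" "0 < w" for s w :: real
  proof -
    have "sqrt (b\<^sup>2 * s\<^sup>2 / w\<^sup>2) = b * s / w"
      using that assms(3) by (simp add: real_sqrt_divide real_sqrt_mult)
    then show ?thesis
      using that by (simp add: field_simps power2_eq_square)
  qed
  from this[of "sqrt p" "sqrt v"] show ?thesis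
    using assms False by simp
qed simp

lemma sq_weighted_over_sqrt:
  fixes p x :: real
  assumes "0 \<le> p"
  shows "(2 * p * x)\<^sup>2 / (4 * p * sqrt p) = sqrt p * x\<^sup>2"
proof (cases "p = 0")
  case False
  then have "(2 * p * x)\<^sup>2 / (4 * p * sqrt p) = p / sqrt p * x\<^sup>2"
    using assms by (simp add: power2_eq_square)
  then show ?thesis
    using assms by (simp add: real_div_sqrt)
qed simp

context orthogonal_resolution
begin

text \<open>The hypothesis on empty blocks keeps the square roots in \<open>lyap\<close> away from their
  singularity at 0: along such directions the corresponding summand is constant.\<close>
lemma DV_lyap:
  assumes "\<forall>i\<le>dd. 0 \<le> weight i \<rho>"
    and "\<And>i. i \<in> {1..dd} \<Longrightarrow> weight i \<rho> = 0 \<Longrightarrow> weight i X = 0"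
  shows "DV lyap \<rho> X = (\<Sum>i\<in>{1..dd}. weight i X / (2 * sqrt (weight i \<rho>)))"
    and "D2V lyap \<rho> X
      = (\<Sum>i\<in>{1..dd}. - ((weight i X)\<^sup>2 / (4 * weight i \<rho> * sqrt (weight i \<rho>))))"
proof -
  have line: "(\<lambda>t. lyap (\<rho> + t *\<^sub>R X))
      = (\<lambda>t. \<Sum>i\<in>{1..dd}. sqrt (weight i \<rho> + t * weight i X))"
    by (simp add: matrix_add_ldistrib matrix_mul_scaleR_right)
  show "DV lyap \<rho> X = (\<Sum>i\<in>{1..dd}. weight i X / (2 * sqrt (weight i \<rho>)))"
    unfolding DV_def line using assms by (intro deriv_sum_sqrt_affine(1)) auto
  show "D2V lyap \<rho> X
      = (\<Sum>i\<in>{1..dd}. - ((weight i X)\<^sup>2 / (4 * weight i \<rho> * sqrt (weight i \<rho>))))"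
    unfolding D2V_def line using assms by (intro deriv_sum_sqrt_affine(2)) auto
qed

lemma D2V_lyap_Gop:
  assumes rho: "madj \<rho> = \<rho>" "\<forall>i\<le>dd. 0 \<le> weight i \<rho>"
  shows "D2V lyap \<rho> (Gop (block_diag c) \<rho>)
    = - (\<Sum>i\<in>{1..dd}. sqrt (weight i \<rho>) * (Re (c i) - (\<Sum>l\<le>dd. Re (c l) * weight l \<rho>))\<^sup>2)"
proof -
  let ?r = "\<Sum>l\<le>dd. Re (c l) * weight l \<rho>"
  have G: "weight i (Gop (block_diag c) \<rho>) = 2 * weight i \<rho> * (Re (c i) - ?r)"
    if "i \<in> {1..dd}" for i
    using weight_Gop[OF rho(1)] that by simp
  have "D2V lyap \<rho> (Gop (block_diag c) \<rho>) = (\<Sum>i\<in>{1..dd}.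
      - ((weight i (Gop (block_diag c) \<rho>))\<^sup>2 / (4 * weight i \<rho> * sqrt (weight i \<rho>))))"
    using rho(2) by (intro DV_lyap(2)) (auto simp: G)
  also have "\<dots> = (\<Sum>i\<in>{1..dd}. - (sqrt (weight i \<rho>) * (Re (c i) - ?r)\<^sup>2))"
    using rho(2) by (intro sum.cong refl) (simp add: G sq_weighted_over_sqrt)
  also have "\<dots> = - (\<Sum>i\<in>{1..dd}. sqrt (weight i \<rho>) * (Re (c i) - ?r)\<^sup>2)"
    by (simp add: sum_negf)
  finally show ?thesis .
qed

lemma mtr_proj_sandwich_block_diag:
  assumes "k \<le> dd"
  shows "mtr (P k ** (block_diag a ** \<rho> ** madj (block_diag a)))
    = of_real ((cmod (a k))\<^sup>2) * mtr (P k ** \<rho>)"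
proof -
  have "mtr (P k ** (M ** \<rho> ** madj M)) = mtr ((madj M ** (P k ** M)) ** \<rho>)" for M
    by (metis matrix_mul_assoc mtr_mult_commute)
  then have "mtr (P k ** (block_diag a ** \<rho> ** madj (block_diag a)))
      = mtr ((madj (block_diag a) ** (P k ** block_diag a)) ** \<rho>)" .
  also have "\<dots> = cnj (a k) * a k * mtr (P k ** \<rho>)"
    using proj_mult_block_diag[OF assms] block_diag_mult_proj[OF assms]
    by (simp add: madj_block_diag)
  finally show ?thesis
    by (metis complex_norm_square mult.commute)
qed

lemma vC_block_diag:
  assumes "madj \<rho> = \<rho>"
  shows "vC (block_diag a) \<rho> = of_real (\<Sum>l\<le>dd. (cmod (a l))\<^sup>2 * weight l \<rho>)"
proof -
  have "mtr (P l ** (block_diag a ** \<rho> ** madj (block_diag a)))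
      = of_real ((cmod (a l))\<^sup>2 * weight l \<rho>)" if "l \<le> dd" for l
    using mtr_proj_sandwich_block_diag[OF that] Im_mtr_proj_herm[OF assms that]
    by (simp add: complex_eq_iff)
  then show ?thesis
    unfolding vC_def by (subst mtr_decompose) simp
qed

text \<open>This holds even when the jump rate \<open>vC\<close> vanishes: both sides are then 0, as \<open>x / 0 = 0\<close>.\<close>
lemma weight_JC_block_diag:
  assumes "madj \<rho> = \<rho>" "k \<le> dd"
  shows "weight k (JC (block_diag a) \<rho>)
    = (cmod (a k))\<^sup>2 * weight k \<rho> / (\<Sum>l\<le>dd. (cmod (a l))\<^sup>2 * weight l \<rho>)"
  using assms
  by (simp add: JC_def vC_block_diag mtr_proj_sandwich_block_diag mtr_mult_cmult_right)

lemma jump_term_lyap: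
  assumes rho: "madj \<rho> = \<rho>" "\<forall>i\<le>dd. 0 \<le> weight i \<rho>"
  shows "(lyap (JC (block_diag a) \<rho>) - lyap \<rho> - DV lyap \<rho> (Hop (block_diag a) \<rho>))
      * Re (vC (block_diag a) \<rho>)
    = (\<Sum>i\<in>{1..dd}. - (1/2) * sqrt (weight i \<rho>)
        * (cmod (a i) - sqrt (\<Sum>l\<le>dd. (cmod (a l))\<^sup>2 * weight l \<rho>))\<^sup>2)"
proof -
  define v where "v = (\<Sum>l\<le>dd. (cmod (a l))\<^sup>2 * weight l \<rho>)"
  have vC: "Re (vC (block_diag a) \<rho>) = v"
    using vC_block_diag[OF rho(1)] by (simp add: v_def)
  have "0 \<le> v"
    unfolding v_def using rho(2) by (auto intro!: sum_nonneg)
  then consider "v = 0" | "0 < v"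
    by linarith
  then show ?thesis
  proof cases
    case 1
    then have "(cmod (a i))\<^sup>2 * weight i \<rho> = 0" if "i \<le> dd" for i
      using that rho(2) unfolding v_def by (subst (asm) sum_nonneg_eq_0_iff) auto
    then have "sqrt (weight i \<rho>) * (cmod (a i))\<^sup>2 = 0" if "i \<in> {1..dd}" for i
      using that by fastforce
    then have "(\<Sum>i\<in>{1..dd}. - (1/2) * sqrt (weight i \<rho>) * (cmod (a i) - sqrt v)\<^sup>2) = 0"
      using 1 by (intro sum.neutral) simp
    then show ?thesis
      using 1 vC unfolding v_def by simp
  next
    case 2
    define q where "q i = (cmod (a i))\<^sup>2 * weight i \<rho> / v" for i
    have J: "weight i (JC (block_diag a) \<rho>) = q i" if "i \<le> dd" for i
      using weight_JC_block_diag[OF rho(1) that] by (simp add: q_def v_def)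
    have H: "weight i (Hop (block_diag a) \<rho>) = q i - weight i \<rho>" if "i \<le> dd" for i
      using J[OF that] by (simp add: Hop_def matrix_diff_ldistrib)
    have "DV lyap \<rho> (Hop (block_diag a) \<rho>)
        = (\<Sum>i\<in>{1..dd}. weight i (Hop (block_diag a) \<rho>) / (2 * sqrt (weight i \<rho>)))"
      using rho(2) by (intro DV_lyap(1)) (auto simp: H q_def)
    also have "\<dots> = (\<Sum>i\<in>{1..dd}. (q i - weight i \<rho>) / (2 * sqrt (weight i \<rho>)))"
      by (intro sum.cong refl) (simp add: H)
    finally have DH: "DV lyap \<rho> (Hop (block_diag a) \<rho>)
        = (\<Sum>i\<in>{1..dd}. (q i - weight i \<rho>) / (2 * sqrt (weight i \<rho>)))" .
    have "(lyap (JC (block_diag a) \<rho>) - lyap \<rho> - DV lyap \<rho> (Hop (block_diag a) \<rho>))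
        * Re (vC (block_diag a) \<rho>)
      = (\<Sum>i\<in>{1..dd}.
          v * (sqrt (q i) - sqrt (weight i \<rho>) - (q i - weight i \<rho>) / (2 * sqrt (weight i \<rho>))))"
      unfolding DH vC by (simp add: J sum_subtractf[symmetric] sum_distrib_left mult.commute)
    also have "\<dots> = (\<Sum>i\<in>{1..dd}. - (1/2) * sqrt (weight i \<rho>) * (cmod (a i) - sqrt v)\<^sup>2)"
      using rho(2) 2 unfolding q_def by (intro sum.cong refl sqrt_jump_remainder) auto
    finally show ?thesis
      by (simp add: v_def)
  qed
qed

lemma gen_lyap_eq:
  assumes "\<forall>i\<le>dd. P i ** H0 = H0 ** P i" "\<forall>i\<le>dd. P i ** H = H ** P i"
    and "\<forall>i\<le>dd. P i ** L = L ** P i"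
    and rho: "madj \<rho> = \<rho>" "\<forall>i\<le>dd. 0 \<le> weight i \<rho>"
  shows "gen H0 H L (block_diag c) (block_diag a) lyap \<rho>
    = - (1/2) * (\<Sum>i\<in>{1..dd}. sqrt (weight i \<rho>) *
      ((Re (c i) - (\<Sum>l\<le>dd. Re (c l) * weight l \<rho>))\<^sup>2
       + (cmod (a i) - sqrt (\<Sum>l\<le>dd. (cmod (a l))\<^sup>2 * weight l \<rho>))\<^sup>2))"
proof -
  have "DV lyap \<rho> (Fop H0 H L (block_diag c) (block_diag a) \<rho>) = 0"
    using rho(2) weight_Fop[OF assms(1-3)] by (subst DV_lyap(1)) auto
  then show ?thesis
    unfolding gen_def using D2V_lyap_Gop[OF rho] jump_term_lyap[OF rho]
    by (simp add: sum_distrib_left sum.distrib algebra_simps sum_negf)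
qed

end

definition sform :: "'n::finite op \<Rightarrow> complex^'n \<Rightarrow> complex^'n \<Rightarrow> complex" where
  "sform \<rho> u w = (\<Sum>i\<in>UNIV. \<Sum>j\<in>UNIV. cnj (u $ i) * \<rho> $ i $ j * w $ j)"

lemma quadratic_nonneg_imp_le:
  fixes A B C :: real
  assumes "\<forall>t. 0 \<le> A - 2 * t * B + t\<^sup>2 * B * C" "0 \<le> A" "0 \<le> B" "0 \<le> C"
  shows "B \<le> A * C"
proof (cases "B = 0")
  case False
  show ?thesis
  proof (cases "C = 0")
    case True
    have "0 \<le> A - 2 * ((A + 1) / (2 * B)) * B"
      using assms(1)[rule_format, of "(A + 1) / (2 * B)"] True by simp
    then show ?thesis
      using False by (simp add: field_simps)
  next
    case False
    have "0 \<le> A - 2 * (1 / C) * B + (1 / C)\<^sup>2 * B * C"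
      using assms(1) by blast
    then show ?thesis
      using False assms(4) by (simp add: field_simps power2_eq_square)
  qed
qed (use assms in simp)

lemma sform_add_scaled:
  "sform \<rho> (\<chi> i. u$i + z * w$i) (\<chi> i. u$i + z * w$i)
    = sform \<rho> u u + z * sform \<rho> u w + cnj z * sform \<rho> w u + z * cnj z * sform \<rho> w w"
proof -
  have "cnj (u$i + z * w$i) * \<rho>$i$j * (u$j + z * w$j) =
    cnj (u$i) * \<rho>$i$j * u$j + z * (cnj (u$i) * \<rho>$i$j * w$j)
    + cnj z * (cnj (w$i) * \<rho>$i$j * u$j) + z * cnj z * (cnj (w$i) * \<rho>$i$j * w$j)" for i j
    by (simp add: algebra_simps)
  then show ?thesis
    unfolding sform_def by (simp only: vec_lambda_beta sum.distrib sum_distrib_left[symmetric])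
qed

lemma sform_swap:
  assumes "madj \<rho> = \<rho>"
  shows "sform \<rho> w u = cnj (sform \<rho> u w)"
proof -
  have herm: "cnj (\<rho> $ i $ j) = \<rho> $ j $ i" for i j
    using assms by (metis madj_def vec_lambda_beta)
  have "cnj (sform \<rho> u w) = (\<Sum>i\<in>UNIV. \<Sum>j\<in>UNIV. u$i * \<rho>$j$i * cnj (w$j))"
    unfolding sform_def by (simp add: herm)
  also have "\<dots> = sform \<rho> w u"
    unfolding sform_def by (subst sum.swap) (simp add: ac_simps)
  finally show ?thesis
    by simp
qed

lemma sform_cauchy_schwarz:
  assumes herm: "madj \<rho> = \<rho>" and psd: "\<forall>v. 0 \<le> Re (sform \<rho> v v)"
  shows "(cmod (sform \<rho> u w))\<^sup>2 \<le> Re (sform \<rho> u u) * Re (sform \<rho> w w)"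
proof -
  define \<beta> where "\<beta> = sform \<rho> u w"
  have nb: "\<beta> * cnj \<beta> = of_real ((cmod \<beta>)\<^sup>2)"
    by (rule complex_norm_square[symmetric])
  have "0 \<le> Re (sform \<rho> u u) - 2 * t * (cmod \<beta>)\<^sup>2 + t\<^sup>2 * (cmod \<beta>)\<^sup>2 * Re (sform \<rho> w w)"
    for t :: real
  proof -
    define z where "z = - of_real t * cnj \<beta>"
    have "z * \<beta> = - (of_real t * (\<beta> * cnj \<beta>))"
      unfolding z_def by (simp add: algebra_simps)
    then have z\<beta>: "z * \<beta> = - of_real (t * (cmod \<beta>)\<^sup>2)"
      by (simp only: nb of_real_mult)
    have "z * cnj z = of_real t * of_real t * (\<beta> * cnj \<beta>)"
      unfolding z_def by (simp add: algebra_simps)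
    then have zz: "z * cnj z = of_real (t\<^sup>2 * (cmod \<beta>)\<^sup>2)"
      by (simp only: nb of_real_mult power2_eq_square)
    have "0 \<le> Re (sform \<rho> (\<chi> i. u$i + z * w$i) (\<chi> i. u$i + z * w$i))"
      using psd by blast
    also have "\<dots> = Re (sform \<rho> u u) + Re (z * \<beta>) + Re (cnj (z * \<beta>)) + Re (z * cnj z * sform \<rho> w w)"
      by (simp only: sform_add_scaled sform_swap[OF herm, of w u] \<beta>_def plus_complex.sel
          complex_cnj_mult)
    also have "\<dots> = Re (sform \<rho> u u) - 2 * t * (cmod \<beta>)\<^sup>2 + t\<^sup>2 * (cmod \<beta>)\<^sup>2 * Re (sform \<rho> w w)"
      by (simp only: z\<beta> zz) (simp add: algebra_simps)
    finally show ?thesis .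
  qed
  then have "(cmod \<beta>)\<^sup>2 \<le> Re (sform \<rho> u u) * Re (sform \<rho> w w)"
    using psd by (intro quadratic_nonneg_imp_le) auto
  then show ?thesis
    by (simp add: \<beta>_def)
qed

lemma sandwich_entry_sform: "(A ** \<rho> ** B)$k$l = sform \<rho> (\<chi> m. cnj (A$k$m)) (\<chi> n. B$n$l)"
  unfolding sform_def matrix_matrix_mult_def
  by (simp add: sum_distrib_right, subst sum.swap, simp add: mult.assoc)

lemma density_sform_nonneg: "is_density \<rho> \<Longrightarrow> 0 \<le> Re (sform \<rho> v v)"
  unfolding is_density_def sform_def by (simp add: mult.assoc)

lemma density_sandwich_diag:
  assumes "is_density \<rho>"
  shows "0 \<le> Re ((A ** \<rho> ** madj A)$k$k)"
    and "Re ((A ** \<rho> ** madj A)$k$k) \<le> Re (mtr (A ** \<rho> ** madj A))"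
proof -
  have nonneg: "0 \<le> Re ((A ** \<rho> ** madj A)$k$k)" for k
    using density_sform_nonneg[OF assms] by (simp add: sandwich_entry_sform madj_def)
  then show "0 \<le> Re ((A ** \<rho> ** madj A)$k$k)" .
  show "Re ((A ** \<rho> ** madj A)$k$k) \<le> Re (mtr (A ** \<rho> ** madj A))"
    unfolding mtr_def Re_sum using nonneg by (intro member_le_sum) auto
qed

lemma density_mtr_sandwich_nonneg: "is_density \<rho> \<Longrightarrow> 0 \<le> Re (mtr (A ** \<rho> ** madj A))"
  unfolding mtr_def Re_sum by (intro sum_nonneg density_sandwich_diag(1))

lemma density_sandwich_entry_bound:
  assumes d: "is_density \<rho>"
  shows "(cmod ((A ** \<rho> ** B)$k$l))\<^sup>2
    \<le> Re (mtr (A ** \<rho> ** madj A)) * Re (mtr (madj B ** \<rho> ** B))"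
proof -
  have "(cmod ((A ** \<rho> ** B)$k$l))\<^sup>2 \<le> Re ((A ** \<rho> ** madj A)$k$k) * Re ((madj B ** \<rho> ** B)$l$l)"
    using d unfolding sandwich_entry_sform
    by (simp add: madj_def is_density_def sform_cauchy_schwarz density_sform_nonneg)
  also have "\<dots> \<le> Re (mtr (A ** \<rho> ** madj A)) * Re (mtr (madj B ** \<rho> ** B))"
    using density_sandwich_diag[OF d, of A k] density_sandwich_diag[OF d, of "madj B" l]
    by (intro mult_mono) auto
  finally show ?thesis .
qed

lemma sqrt_sum_le_sum_sqrt:
  assumes "\<And>i. i \<in> I \<Longrightarrow> 0 \<le> f i"
  shows "sqrt (\<Sum>i\<in>I. f i) \<le> (\<Sum>i\<in>I. sqrt (f i))"
  using L2_set_le_sum[of I "\<lambda>i. sqrt (f i)"] assms by (simp add: L2_set_def)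

lemma norm_le_sum_entries: "norm (X::'n::finite op) \<le> (\<Sum>k\<in>UNIV. \<Sum>l\<in>UNIV. cmod (X$k$l))"
proof -
  have "norm X \<le> (\<Sum>k\<in>UNIV. norm (X$k))"
    unfolding norm_vec_def by (rule L2_set_le_sum) auto
  also have "\<dots> \<le> (\<Sum>k\<in>UNIV. \<Sum>l\<in>UNIV. cmod (X$k$l))"
    unfolding norm_vec_def by (intro sum_mono L2_set_le_sum) auto
  finally show ?thesis .
qed

lemma cmod_mtr_mult_le:
  fixes Q X :: "'n::finite op"
  shows "cmod (mtr (Q ** X)) \<le> (\<Sum>i\<in>UNIV. \<Sum>j\<in>UNIV. cmod (Q$i$j)) * norm X"
proof -
  have "cmod (mtr (Q ** X)) \<le> (\<Sum>k\<in>UNIV. \<Sum>m\<in>UNIV. cmod (Q$k$m) * cmod (X$m$k))"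
    unfolding mtr_def matrix_matrix_mult_def
    by (simp, rule order_trans[OF norm_sum], rule sum_mono, rule order_trans[OF norm_sum])
       (simp add: norm_mult)
  also have "\<dots> \<le> (\<Sum>k\<in>UNIV. \<Sum>m\<in>UNIV. cmod (Q$k$m) * norm X)"
  proof (intro sum_mono mult_left_mono)
    fix k m
    show "cmod (X$m$k) \<le> norm X"
      using Finite_Cartesian_Product.norm_nth_le[of "X$m" k] Finite_Cartesian_Product.norm_nth_le[of X m] by linarith
  qed simp
  finally show ?thesis
    by (simp add: sum_distrib_right)
qed

locale op_norm =
  fixes N :: "'n::finite op \<Rightarrow> real"
  assumes is_op_norm: "is_op_norm N"
begin

lemma nonneg: "0 \<le> N X"
  using is_op_norm by (simp add: is_op_norm_def)

lemma eq_0_iff: "N X = 0 \<longleftrightarrow> X = 0"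
  using is_op_norm by (simp add: is_op_norm_def)

lemma triangle: "N (A + B) \<le> N A + N B"
  using is_op_norm by (simp add: is_op_norm_def)

lemma homogeneous: "N (r *\<^sub>R X) = \<bar>r\<bar> * N X"
  using is_op_norm cmult_of_real[of r X] by (simp add: is_op_norm_def flip: cmult_of_real)

lemma sum_le: "finite S \<Longrightarrow> N (sum f S) \<le> (\<Sum>i\<in>S. N (f i))"
proof (induction S rule: finite_induct)
  case empty
  then show ?case
    using eq_0_iff[of 0] by simp
next
  case (insert x F)
  then show ?case
    using triangle[of "f x" "sum f F"] by simp
qed

lemma le_norm: "N X \<le> (\<Sum>b\<in>Basis. N b) * norm X"
proof -
  have "N X = N (\<Sum>b\<in>Basis. (X \<bullet> b) *\<^sub>R b)"
    by (simp add: euclidean_representation)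
  also have "\<dots> \<le> (\<Sum>b\<in>Basis. N ((X \<bullet> b) *\<^sub>R b))"
    by (rule sum_le) simp
  also have "\<dots> \<le> (\<Sum>b\<in>Basis. norm X * N b)"
    by (intro sum_mono) (simp add: homogeneous Basis_le_norm nonneg mult_right_mono)
  finally show ?thesis
    by (simp add: sum_distrib_left mult.commute)
qed

lemma lipschitz: "(\<Sum>b\<in>Basis. N b)-lipschitz_on S N"
proof (rule lipschitz_onI)
  fix X Y
  have "N X \<le> N Y + N (X - Y)" "N Y \<le> N X + N (X - Y)"
    using triangle[of Y "X - Y"] triangle[of X "Y - X"] homogeneous[of "-1" "Y - X"] by simp_all
  then show "dist (N X) (N Y) \<le> (\<Sum>b\<in>Basis. N b) * dist X Y"
    using le_norm[of "X - Y"] by (simp add: dist_real_def dist_norm)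
qed (simp add: sum_nonneg nonneg)

lemma continuous: "continuous_on S N"
  using lipschitz by (rule lipschitz_on_continuous_on)

lemma norm_le: "\<exists>k>0. \<forall>X. k * norm X \<le> N X"
proof -
  obtain X0 where X0: "X0 \<in> sphere 0 1" and min: "\<forall>Y\<in>sphere 0 1. N X0 \<le> N Y"
    using continuous_attains_inf[OF compact_sphere _ continuous, of 0 1] by auto
  have "N X0 * norm X \<le> N X" for X
  proof (cases "X = 0")
    case False
    then have "N X0 \<le> N ((1 / norm X) *\<^sub>R X)"
      using min by simp
    then show ?thesis
      using False by (simp add: homogeneous field_simps)
  qed (simp add: nonneg)
  moreover have "0 < N X0"
    using X0 eq_0_iff nonneg by (metis less_eq_real_def mem_sphere_0 norm_zero zero_neq_one)
  ultimately show ?thesis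
    by blast
qed

end

lemma weighted_mean_dev_le:
  fixes p x :: "nat \<Rightarrow> real"
  assumes "\<forall>k\<le>dd. 0 \<le> p k" "(\<Sum>k\<le>dd. p k) = 1"
  shows "\<bar>(\<Sum>l\<le>dd. x l * p l) - x 0\<bar> \<le> (\<Sum>k\<in>{1..dd}. \<bar>x k - x 0\<bar>) * (\<Sum>k\<in>{1..dd}. p k)"
proof -
  have split: "{..dd} = insert 0 {1..dd}"
    by auto
  have "(\<Sum>l\<le>dd. x l * p l) - x 0 = (\<Sum>l\<le>dd. (x l - x 0) * p l)"
    using assms(2) by (simp add: left_diff_distrib sum_subtractf flip: sum_distrib_left)
  also have "\<dots> = (\<Sum>k\<in>{1..dd}. (x k - x 0) * p k)"
    by (simp add: split)
  finally have "\<bar>(\<Sum>l\<le>dd. x l * p l) - x 0\<bar> \<le> (\<Sum>k\<in>{1..dd}. \<bar>x k - x 0\<bar> * p k)"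
    using assms(1) by (simp add: order_trans[OF sum_abs] abs_mult)
  also have "\<dots> \<le> (\<Sum>k\<in>{1..dd}. \<bar>x k - x 0\<bar> * (\<Sum>k\<in>{1..dd}. p k))"
    using assms(1) by (intro sum_mono mult_left_mono member_le_sum) auto
  finally show ?thesis
    by (simp add: sum_distrib_right)
qed

lemma sq_half_sub_le: "(x::real)\<^sup>2 / 2 - d\<^sup>2 \<le> (x - d)\<^sup>2"
  using zero_le_power2[of "x - 2 * d"] by (simp add: power2_eq_square algebra_simps)

lemma sqrt_diff_sq_le:
  assumes "0 \<le> x" "0 \<le> y"
  shows "(sqrt x - sqrt y)\<^sup>2 \<le> \<bar>x - y\<bar>"
proof -
  have "(sqrt x - sqrt y)\<^sup>2 \<le> x - y" if "0 \<le> y" "y \<le> x" for x y :: real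
  proof -
    have "sqrt y * sqrt y \<le> sqrt x * sqrt y"
      using that by (intro mult_right_mono) auto
    then show ?thesis
      using that by (simp add: power2_eq_square algebra_simps)
  qed
  from this[of y x] this[of x y] show ?thesis
    using assms by (cases "y \<le> x") (auto simp: power2_commute)
qed

lemma mean_bracket_lower_bound:
  fixes p cr am :: "nat \<Rightarrow> real"
  assumes p: "\<forall>k\<le>dd. 0 \<le> p k" "(\<Sum>k\<le>dd. p k) = 1"
    and "0 \<le> am 0"
    and cl: "cl \<le> (cr i - cr 0)\<^sup>2" and al: "al \<le> (am i - am 0)\<^sup>2"
    and small: "((\<Sum>k\<in>{1..dd}. \<bar>cr k - cr 0\<bar>)\<^sup>2 + (\<Sum>k\<in>{1..dd}. \<bar>(am k)\<^sup>2 - (am 0)\<^sup>2\<bar>))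
      * (\<Sum>k\<in>{1..dd}. p k) \<le> (cl + al) / 4"
  shows "(cl + al) / 4
    \<le> (cr i - (\<Sum>l\<le>dd. cr l * p l))\<^sup>2 + (am i - sqrt (\<Sum>l\<le>dd. (am l)\<^sup>2 * p l))\<^sup>2"
proof -
  define S where "S = (\<Sum>k\<in>{1..dd}. p k)"
  define Mc where "Mc = (\<Sum>k\<in>{1..dd}. \<bar>cr k - cr 0\<bar>)"
  define Ma where "Ma = (\<Sum>k\<in>{1..dd}. \<bar>(am k)\<^sup>2 - (am 0)\<^sup>2\<bar>)"
  define v where "v = (\<Sum>l\<le>dd. (am l)\<^sup>2 * p l)"
  have "{..dd} = insert 0 {1..dd}"
    by auto
  then have S: "0 \<le> S" "S \<le> 1"
    using p unfolding S_def by (auto intro: sum_nonneg)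
  have "((\<Sum>l\<le>dd. cr l * p l) - cr 0)\<^sup>2 \<le> (Mc * S)\<^sup>2"
    using weighted_mean_dev_le[OF p, of cr] unfolding Mc_def S_def
    by (metis abs_ge_zero power2_abs power_mono)
  also have "\<dots> = Mc\<^sup>2 * (S * S)"
    by (simp add: power2_eq_square)
  also have "\<dots> \<le> Mc\<^sup>2 * S"
    using S by (intro mult_left_mono mult_left_le) auto
  finally have "(cr i - cr 0)\<^sup>2 / 2 - Mc\<^sup>2 * S \<le> (cr i - (\<Sum>l\<le>dd. cr l * p l))\<^sup>2"
    using sq_half_sub_le[of "cr i - cr 0" "(\<Sum>l\<le>dd. cr l * p l) - cr 0"] by simp
  moreover have "(sqrt v - am 0)\<^sup>2 \<le> Ma * S"
  proof -
    have "(sqrt v - sqrt ((am 0)\<^sup>2))\<^sup>2 \<le> \<bar>v - (am 0)\<^sup>2\<bar>"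
      using p unfolding v_def by (intro sqrt_diff_sq_le) (auto intro: sum_nonneg)
    also have "\<dots> \<le> Ma * S"
      using weighted_mean_dev_le[OF p, of "\<lambda>k. (am k)\<^sup>2"] by (simp add: Ma_def S_def v_def)
    finally show ?thesis
      using assms(3) by simp
  qed
  then have "(am i - am 0)\<^sup>2 / 2 - Ma * S \<le> (am i - sqrt v)\<^sup>2"
    using sq_half_sub_le[of "am i - am 0" "sqrt v - am 0"] by simp
  ultimately show ?thesis
    using cl al small by (simp add: S_def Mc_def Ma_def v_def field_simps)
qed

context orthogonal_resolution
begin

lemma weight_nonneg:
  assumes "is_density \<rho>" "i \<le> dd"
  shows "0 \<le> weight i \<rho>"
proof -
  have "mtr (P i ** \<rho>) = mtr ((P i ** P i) ** \<rho>)"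
    using P_idem assms(2) by simp
  also have "\<dots> = mtr (P i ** \<rho> ** madj (P i))"
    using P_herm assms(2) by (metis matrix_mul_assoc mtr_mult_commute)
  finally show ?thesis
    using density_mtr_sandwich_nonneg[OF assms(1)] by simp
qed

lemma sum_weights:
  assumes "is_density \<rho>"
  shows "(\<Sum>k\<le>dd. weight k \<rho>) = 1"
proof -
  have "(\<Sum>k\<le>dd. mtr (P k ** \<rho>)) = 1"
    using assms mtr_decompose[of \<rho>] by (simp add: is_density_def)
  then show ?thesis
    by (metis one_complex.sel(1) Re_sum)
qed

lemma outer_weight_eq:
  assumes "is_density \<rho>"
  shows "1 - weight 0 \<rho> = (\<Sum>k\<in>{1..dd}. weight k \<rho>)"
proof -
  have "{..dd} = insert 0 {1..dd}"
    by auto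
  then show ?thesis
    using sum_weights[OF assms] by simp
qed

lemma outer_weight_nonneg: "is_density \<rho> \<Longrightarrow> 0 \<le> 1 - weight 0 \<rho>"
  unfolding outer_weight_eq using weight_nonneg by (intro sum_nonneg) auto

lemma sqrt_outer_weight_le_lyap:
  assumes "is_density \<rho>"
  shows "sqrt (1 - weight 0 \<rho>) \<le> lyap \<rho>"
  unfolding outer_weight_eq[OF assms]
  using weight_nonneg[OF assms] by (intro sqrt_sum_le_sum_sqrt) auto

lemma lyap_le_sqrt_outer_weight:
  assumes "is_density \<rho>"
  shows "lyap \<rho> \<le> dd * sqrt (1 - weight 0 \<rho>)"
proof -
  have "lyap \<rho> \<le> (\<Sum>i\<in>{1..dd}. sqrt (1 - weight 0 \<rho>))"
    unfolding outer_weight_eq[OF assms] using weight_nonneg[OF assms]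
    by (intro sum_mono real_sqrt_le_mono member_le_sum) auto
  then show ?thesis
    by simp
qed

abbreviation Q0 :: "'n op" where
  "Q0 \<equiv> mat 1 - P 0"

lemma Q0_mult_P0: "Q0 ** P 0 = 0"
  using P_idem by (simp add: matrix_diff_rdistrib)

lemma Q0_idem: "Q0 ** Q0 = Q0"
  using Q0_mult_P0 by (simp add: matrix_diff_ldistrib)

lemma mtr_Q0_sandwich:
  assumes "is_density \<rho>"
  shows "Re (mtr (Q0 ** \<rho> ** madj Q0)) = 1 - weight 0 \<rho>"
proof -
  have "madj Q0 = Q0"
    using P_herm by simp
  then have "mtr (Q0 ** \<rho> ** madj Q0) = mtr (Q0 ** (Q0 ** \<rho>))"
    using mtr_mult_commute by metis
  also have "\<dots> = mtr (Q0 ** \<rho>)"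
    by (simp only: matrix_mul_assoc Q0_idem)
  also have "\<dots> = 1 - mtr (P 0 ** \<rho>)"
    using assms by (simp add: matrix_diff_rdistrib is_density_def)
  finally show ?thesis
    by simp
qed

lemma offdiag_eq: "\<rho> - P 0 ** \<rho> ** P 0 = Q0 ** \<rho> + \<rho> ** Q0 - Q0 ** \<rho> ** Q0"
  by (simp add: matrix_diff_ldistrib matrix_diff_rdistrib matrix_mul_assoc algebra_simps)

lemma offdiag_entry_le:
  assumes d: "is_density \<rho>"
  shows "cmod ((\<rho> - P 0 ** \<rho> ** P 0)$k$l) \<le> 3 * sqrt (1 - weight 0 \<rho>)"
proof -
  define S where "S = 1 - weight 0 \<rho>"
  have S: "0 \<le> S" "S \<le> 1"
    using mtr_Q0_sandwich[OF d] density_mtr_sandwich_nonneg[OF d, of Q0] weight_nonneg[OF d, of 0]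
    by (simp_all add: S_def)
  have one: "Re (mtr (mat 1 ** \<rho> ** madj (mat 1))) = 1"
    using d by (simp add: is_density_def)
  have herm: "madj Q0 = Q0"
    using P_herm by simp
  have "(cmod ((Q0 ** \<rho> ** mat 1)$k$l))\<^sup>2 \<le> S"
    using density_sandwich_entry_bound[OF d, of Q0 "mat 1" k l] mtr_Q0_sandwich[OF d] one
    by (simp add: S_def)
  moreover have "(cmod ((mat 1 ** \<rho> ** Q0)$k$l))\<^sup>2 \<le> S"
    using density_sandwich_entry_bound[OF d, of "mat 1" Q0 k l] mtr_Q0_sandwich[OF d] one herm
    by (simp add: S_def)
  moreover have "(cmod ((Q0 ** \<rho> ** Q0)$k$l))\<^sup>2 \<le> S * S"
    using density_sandwich_entry_bound[OF d, of Q0 Q0 k l] mtr_Q0_sandwich[OF d] herm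
    by (simp add: S_def)
  then have "(cmod ((Q0 ** \<rho> ** Q0)$k$l))\<^sup>2 \<le> S"
    using S mult_left_le[of S S] by linarith
  ultimately have b: "cmod ((Q0 ** \<rho>)$k$l) \<le> sqrt S" "cmod ((\<rho> ** Q0)$k$l) \<le> sqrt S"
    "cmod ((Q0 ** \<rho> ** Q0)$k$l) \<le> sqrt S"
    by (simp_all add: real_le_rsqrt)
  have "cmod ((A + B - C)$k$l) \<le> cmod (A$k$l) + cmod (B$k$l) + cmod (C$k$l)"
    for A B C :: "'n op"
    using norm_triangle_ineq4[of "A$k$l + B$k$l" "C$k$l"] norm_triangle_ineq[of "A$k$l" "B$k$l"]
    by simp
  from this[of "Q0 ** \<rho>" "\<rho> ** Q0" "Q0 ** \<rho> ** Q0"] show ?thesis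
    unfolding offdiag_eq S_def[symmetric] using b by linarith
qed

lemma norm_offdiag_le:
  assumes "is_density \<rho>"
  shows "norm (\<rho> - P 0 ** \<rho> ** P 0) \<le> 3 * (real CARD('n))\<^sup>2 * sqrt (1 - weight 0 \<rho>)"
proof -
  have "norm (\<rho> - P 0 ** \<rho> ** P 0) \<le> (\<Sum>k\<in>UNIV. \<Sum>l\<in>UNIV. cmod ((\<rho> - P 0 ** \<rho> ** P 0)$k$l))"
    by (rule norm_le_sum_entries)
  also have "\<dots> \<le> (\<Sum>k\<in>(UNIV::'n set). \<Sum>l\<in>(UNIV::'n set). 3 * sqrt (1 - weight 0 \<rho>))"
    by (intro sum_mono offdiag_entry_le[OF assms])
  finally show ?thesis
    by (simp add: power2_eq_square)
qed

lemma outer_weight_le_norm_offdiag: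
  assumes "is_density \<rho>"
  shows "1 - weight 0 \<rho> \<le> (\<Sum>i\<in>UNIV. \<Sum>j\<in>UNIV. cmod (Q0$i$j)) * norm (\<rho> - P 0 ** \<rho> ** P 0)"
proof -
  have "Q0 ** (P 0 ** \<rho> ** P 0) = 0"
    by (simp add: matrix_mul_assoc Q0_mult_P0)
  then have "1 - weight 0 \<rho> = Re (mtr (Q0 ** (\<rho> - P 0 ** \<rho> ** P 0)))"
    using assms by (simp add: matrix_diff_ldistrib matrix_diff_rdistrib is_density_def)
  also have "\<dots> \<le> cmod (mtr (Q0 ** (\<rho> - P 0 ** \<rho> ** P 0)))"
    by (rule complex_Re_le_cmod)
  also have "\<dots> \<le> (\<Sum>i\<in>UNIV. \<Sum>j\<in>UNIV. cmod (Q0$i$j)) * norm (\<rho> - P 0 ** \<rho> ** P 0)"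
    by (rule cmod_mtr_mult_le)
  finally show ?thesis .
qed

lemma gen_lyap_decay:
  assumes "\<forall>i\<le>dd. P i ** H0 = H0 ** P i" "\<forall>i\<le>dd. P i ** H = H ** P i"
    and "\<forall>i\<le>dd. P i ** L = L ** P i"
    and cl: "\<forall>i\<in>{1..dd}. cl \<le> (Re (c i) - Re (c 0))\<^sup>2"
    and al: "\<forall>i\<in>{1..dd}. al \<le> (cmod (a i) - cmod (a 0))\<^sup>2"
    and "0 < cl + al"
  shows "\<exists>\<delta>>0. \<forall>\<rho>. is_density \<rho> \<and> 1 - weight 0 \<rho> \<le> \<delta> \<longrightarrow>
    gen H0 H L (block_diag c) (block_diag a) lyap \<rho> \<le> - ((cl + al) / 8) * lyap \<rho>"
proof -
  define M where "M = (\<Sum>k\<in>{1..dd}. \<bar>Re (c k) - Re (c 0)\<bar>)\<^sup>2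
    + (\<Sum>k\<in>{1..dd}. \<bar>(cmod (a k))\<^sup>2 - (cmod (a 0))\<^sup>2\<bar>)"
  have "0 \<le> M"
    unfolding M_def by (intro add_nonneg_nonneg sum_nonneg) auto
  define \<delta> where "\<delta> = (cl + al) / (4 * (M + 1))"
  have "gen H0 H L (block_diag c) (block_diag a) lyap \<rho> \<le> - ((cl + al) / 8) * lyap \<rho>"
    if d: "is_density \<rho>" and small: "1 - weight 0 \<rho> \<le> \<delta>" for \<rho>
  proof -
    let ?B = "\<lambda>i. (Re (c i) - (\<Sum>l\<le>dd. Re (c l) * weight l \<rho>))\<^sup>2
      + (cmod (a i) - sqrt (\<Sum>l\<le>dd. (cmod (a l))\<^sup>2 * weight l \<rho>))\<^sup>2"
    have "M * (1 - weight 0 \<rho>) \<le> (M + 1) * \<delta>"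
      using \<open>0 \<le> M\<close> small outer_weight_nonneg[OF d] by (intro mult_mono) auto
    also have "\<dots> = (cl + al) / 4"
      using \<open>0 \<le> M\<close> by (simp add: \<delta>_def field_simps add_nonneg_eq_0_iff)
    finally have "M * (\<Sum>k\<in>{1..dd}. weight k \<rho>) \<le> (cl + al) / 4"
      unfolding outer_weight_eq[OF d] .
    then have "(cl + al) / 4 \<le> ?B i" if "i \<in> {1..dd}" for i
      using that weight_nonneg[OF d] sum_weights[OF d] cl al
      by (intro mean_bracket_lower_bound[where dd = dd]) (auto simp: M_def)
    then have "(\<Sum>i\<in>{1..dd}. sqrt (weight i \<rho>) * ((cl + al) / 4))
        \<le> (\<Sum>i\<in>{1..dd}. sqrt (weight i \<rho>) * ?B i)"
      using weight_nonneg[OF d] by (intro sum_mono mult_left_mono) auto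
    moreover have "gen H0 H L (block_diag c) (block_diag a) lyap \<rho>
        = - (1/2) * (\<Sum>i\<in>{1..dd}. sqrt (weight i \<rho>) * ?B i)"
      using d weight_nonneg[OF d] by (intro gen_lyap_eq assms) (auto simp: is_density_def)
    ultimately have "gen H0 H L (block_diag c) (block_diag a) lyap \<rho>
        \<le> - (1/2) * (\<Sum>i\<in>{1..dd}. sqrt (weight i \<rho>) * ((cl + al) / 4))"
      by linarith
    also have "\<dots> = - ((cl + al) / 8) * lyap \<rho>"
      by (simp only: flip: sum_distrib_right) (simp add: algebra_simps)
    finally show ?thesis .
  qed
  moreover have "0 < \<delta>"
    using \<open>0 \<le> M\<close> \<open>0 < cl + al\<close> by (simp add: \<delta>_def)
  ultimately show ?thesis
    by blast
qed

end

lemma continuous_on_madj: "continuous_on S (madj :: 'n::finite op \<Rightarrow> 'n op)"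
  unfolding madj_def by (intro continuous_intros)

lemma continuous_on_mtr: "continuous_on S (mtr :: 'n::finite op \<Rightarrow> complex)"
  unfolding mtr_def by (intro continuous_intros)

lemma closed_density: "closed {\<sigma>::'n::finite op. is_density \<sigma>}"
  unfolding is_density_def Collect_conj_eq
  by (intro closed_Int closed_Collect_eq closed_Collect_all closed_Collect_le continuous_on_madj
      continuous_on_mtr continuous_intros)

lemma continuous_on_offdiag: "continuous_on S (\<lambda>X::'n::finite op. X - A ** X ** B)"
  unfolding matrix_matrix_mult_def by (intro continuous_intros)

locale normed_resolution = orthogonal_resolution P dd + op_norm N
  for P :: "nat \<Rightarrow> 'n::finite op" and dd :: nat and N :: "'n op \<Rightarrow> real"
begin

abbreviation dist0 :: "'n op \<Rightarrow> real" where
  "dist0 \<rho> \<equiv> N (\<rho> - P 0 ** \<rho> ** P 0)"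

lemma outer_weight_le_dist0: "\<exists>K>0. \<forall>\<rho>. is_density \<rho> \<longrightarrow> 1 - weight 0 \<rho> \<le> K * dist0 \<rho>"
proof -
  obtain k where k: "0 < k" "\<And>X. k * norm X \<le> N X"
    using norm_le by blast
  define KQ where "KQ = (\<Sum>i\<in>UNIV. \<Sum>j\<in>UNIV. cmod (Q0$i$j))"
  have "0 \<le> KQ"
    unfolding KQ_def by (intro sum_nonneg) auto
  have "1 - weight 0 \<rho> \<le> (KQ + 1) / k * dist0 \<rho>" if "is_density \<rho>" for \<rho>
  proof -
    have "1 - weight 0 \<rho> \<le> KQ * norm (\<rho> - P 0 ** \<rho> ** P 0)"
      using outer_weight_le_norm_offdiag[OF that] by (simp add: KQ_def)
    also have "\<dots> \<le> (KQ + 1) * norm (\<rho> - P 0 ** \<rho> ** P 0)"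
      by (intro mult_right_mono) auto
    also have "\<dots> \<le> (KQ + 1) * (dist0 \<rho> / k)"
      using k \<open>0 \<le> KQ\<close> by (intro mult_left_mono) (auto simp: field_simps)
    finally show ?thesis
      by simp
  qed
  then show ?thesis
    using k(1) \<open>0 \<le> KQ\<close> by (intro exI[of _ "(KQ + 1) / k"]) auto
qed

lemma dist0_le_outer_weight: "\<exists>K>0. \<forall>\<rho>. is_density \<rho> \<longrightarrow> dist0 \<rho> \<le> K * sqrt (1 - weight 0 \<rho>)"
proof -
  define K where "K = (\<Sum>b\<in>Basis. N b) * (3 * (real CARD('n))\<^sup>2)"
  have "0 \<le> K"
    unfolding K_def by (intro mult_nonneg_nonneg sum_nonneg nonneg) auto
  have "dist0 \<rho> \<le> (K + 1) * sqrt (1 - weight 0 \<rho>)" if "is_density \<rho>" for \<rho>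
  proof -
    have "dist0 \<rho> \<le> (\<Sum>b\<in>Basis. N b) * norm (\<rho> - P 0 ** \<rho> ** P 0)"
      by (rule le_norm)
    also have "\<dots> \<le> K * sqrt (1 - weight 0 \<rho>)"
      unfolding K_def mult.assoc using norm_offdiag_le[OF that]
      by (intro mult_left_mono) (auto intro: sum_nonneg nonneg)
    also have "\<dots> \<le> (K + 1) * sqrt (1 - weight 0 \<rho>)"
      using outer_weight_nonneg[OF that] by (intro mult_right_mono) auto
    finally show ?thesis .
  qed
  then show ?thesis
    using \<open>0 \<le> K\<close> by (intro exI[of _ "K + 1"]) auto
qed

lemma lyap_comparison:
  "\<exists>c1 c2. 0 < c1 \<and> 0 < c2 \<and>
    (\<forall>\<rho>. is_density \<rho> \<longrightarrow> dist0 \<rho> / c2 \<le> lyap \<rho> \<and> lyap \<rho> \<le> sqrt (dist0 \<rho> / c1))"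
proof -
  obtain K1 where K1: "0 < K1" "\<forall>\<rho>. is_density \<rho> \<longrightarrow> 1 - weight 0 \<rho> \<le> K1 * dist0 \<rho>"
    using outer_weight_le_dist0 by blast
  obtain K2 where K2: "0 < K2" "\<forall>\<rho>. is_density \<rho> \<longrightarrow> dist0 \<rho> \<le> K2 * sqrt (1 - weight 0 \<rho>)"
    using dist0_le_outer_weight by blast
  define c1 where "c1 = 1 / (((real dd)\<^sup>2 + 1) * K1)"
  have "dist0 \<rho> / K2 \<le> lyap \<rho> \<and> lyap \<rho> \<le> sqrt (dist0 \<rho> / c1)" if d: "is_density \<rho>" for \<rho>
  proof
    have "dist0 \<rho> \<le> K2 * sqrt (1 - weight 0 \<rho>)"
      using K2(2) d by blast
    also have "\<dots> \<le> K2 * lyap \<rho>"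
      using K2(1) sqrt_outer_weight_le_lyap[OF d] by (intro mult_left_mono) auto
    finally show "dist0 \<rho> / K2 \<le> lyap \<rho>"
      using K2(1) by (simp add: divide_le_eq mult.commute)
    have "lyap \<rho> \<le> sqrt ((real dd)\<^sup>2 * (1 - weight 0 \<rho>))"
      using lyap_le_sqrt_outer_weight[OF d] by (simp add: real_sqrt_mult)
    also have "\<dots> \<le> sqrt (((real dd)\<^sup>2 + 1) * (K1 * dist0 \<rho>))"
      using K1(2) d outer_weight_nonneg[OF d]
      by (intro real_sqrt_le_mono mult_mono) auto
    also have "\<dots> = sqrt (dist0 \<rho> / c1)"
      by (simp add: c1_def field_simps)
    finally show "lyap \<rho> \<le> sqrt (dist0 \<rho> / c1)" .
  qed
  moreover have "0 < c1"
    using K1(1) by (simp add: c1_def zero_less_mult_iff add_nonneg_pos)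
  ultimately show ?thesis
    using K2(1) by blast
qed

lemma continuous_on_dist0: "continuous_on S dist0"
  by (rule continuous_on_compose2[OF continuous continuous_on_offdiag]) auto

lemma gen_lyap_decay_near_support:
  assumes "\<forall>i\<le>dd. P i ** H0 = H0 ** P i" "\<forall>i\<le>dd. P i ** H = H ** P i"
    and "\<forall>i\<le>dd. P i ** L = L ** P i"
    and "\<forall>i\<in>{1..dd}. cl \<le> (Re (c i) - Re (c 0))\<^sup>2"
    and "\<forall>i\<in>{1..dd}. al \<le> (cmod (a i) - cmod (a 0))\<^sup>2"
    and "0 < cl + al"
  shows "\<exists>r>0. \<forall>\<rho>. is_density \<rho> \<and> dist0 \<rho> \<le> r \<longrightarrow>
    gen H0 H L (block_diag c) (block_diag a) lyap \<rho> \<le> - ((cl + al) / 8) * lyap \<rho>"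
proof -
  obtain \<delta> where "0 < \<delta>" and decay: "\<forall>\<rho>. is_density \<rho> \<and> 1 - weight 0 \<rho> \<le> \<delta> \<longrightarrow>
      gen H0 H L (block_diag c) (block_diag a) lyap \<rho> \<le> - ((cl + al) / 8) * lyap \<rho>"
    using gen_lyap_decay[OF assms] by blast
  obtain K where K: "0 < K" "\<forall>\<rho>. is_density \<rho> \<longrightarrow> 1 - weight 0 \<rho> \<le> K * dist0 \<rho>"
    using outer_weight_le_dist0 by blast
  have "1 - weight 0 \<rho> \<le> \<delta>" if "is_density \<rho>" "dist0 \<rho> \<le> \<delta> / K" for \<rho>
  proof -
    have "1 - weight 0 \<rho> \<le> K * dist0 \<rho>"
      using K(2) that(1) by blast
    also have "\<dots> \<le> \<delta>"
      using that(2) K(1) by (simp add: le_divide_eq mult.commute)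
    finally show ?thesis .
  qed
  then show ?thesis
    using decay \<open>0 < \<delta>\<close> K(1) by (intro exI[of _ "\<delta> / K"]) auto
qed

end

lemma closure_sublevel_subset:
  fixes f :: "'a::topological_space \<Rightarrow> real"
  assumes "closed {x. D x}" "continuous_on UNIV f"
  shows "closure {x. D x \<and> f x < l} \<subseteq> {x. D x \<and> f x \<le> l}"
proof (rule closure_minimal)
  show "closed {x. D x \<and> f x \<le> l}"
    unfolding Collect_conj_eq using assms by (intro closed_Int closed_Collect_le continuous_intros)
qed auto

lemma classK_divide: "0 < c \<Longrightarrow> classK (\<lambda>r. r / c)"
  unfolding classK_def by (auto intro!: continuous_intros mono_onI divide_right_mono)

lemma classK_sqrt_divide: "0 < c \<Longrightarrow> classK (\<lambda>r. sqrt (r / c))"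
  unfolding classK_def by (auto intro!: continuous_intros mono_onI divide_right_mono)

lemma classK_bounds_of_decay:
  fixes d V A :: "'a::topological_space \<Rightarrow> real"
  assumes "closed {x. D x}" "continuous_on UNIV d"
    and "0 < c1" "0 < c2" "0 < k" "0 < r"
    and comparison: "\<forall>x. D x \<longrightarrow> d x / c2 \<le> V x \<and> V x \<le> sqrt (d x / c1)"
    and decay: "\<forall>x. D x \<and> d x \<le> r \<longrightarrow> A x \<le> - k * V x"
  shows "\<exists>\<mu>1 \<mu>2 \<nu> l. classK \<mu>1 \<and> classK \<mu>2 \<and> classK \<nu> \<and> 0 < l \<and>
    (\<forall>x\<in>closure {y. D y \<and> d y < l}. \<mu>1 (d x) \<le> V x \<and> V x \<le> \<mu>2 (d x) \<and> A x \<le> - \<nu> (d x))"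
proof (intro exI conjI)
  show "classK (\<lambda>s. s / c2)" "classK (\<lambda>s. sqrt (s / c1))" "classK (\<lambda>s. s / (c2 / k))"
    by (rule classK_divide classK_sqrt_divide, use assms in simp)+
  show "\<forall>x\<in>closure {y. D y \<and> d y < r}.
      d x / c2 \<le> V x \<and> V x \<le> sqrt (d x / c1) \<and> A x \<le> - (d x / (c2 / k))"
  proof
    fix x
    assume "x \<in> closure {y. D y \<and> d y < r}"
    then have "D x" "d x \<le> r"
      using closure_sublevel_subset[OF assms(1,2)] by blast+
    then have lower: "d x / c2 \<le> V x" and upper: "V x \<le> sqrt (d x / c1)"
      and decay_x: "A x \<le> - k * V x"
      using comparison decay by auto
    have "d x / (c2 / k) = k * (d x / c2)"
      by simp
    also have "\<dots> \<le> k * V x"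
      using lower \<open>0 < k\<close> by (intro mult_left_mono) auto
    finally show "d x / c2 \<le> V x \<and> V x \<le> sqrt (d x / c1) \<and> A x \<le> - (d x / (c2 / k))"
      using lower upper decay_x by linarith
  qed
qed (use assms in simp)

theorem lemma5:
  fixes P :: "nat \<Rightarrow> 'n::finite op"
    and dd m j :: nat
    and H0 :: "'n op"
    and Hk Lk Ck Dk :: "nat \<Rightarrow> 'n op"
    and c a :: "nat \<Rightarrow> complex"
    and N :: "'n op \<Rightarrow> real"
    and d0 V :: "'n op \<Rightarrow> real"
    and cl al :: real
  assumes norm: "is_op_norm N"
    and dd_pos: "1 \<le> dd" and dd_le: "dd \<le> CARD('n) - 1"
    and P_herm: "\<forall>i\<le>dd. madj (P i) = P i"
    and P_idem: "\<forall>i\<le>dd. P i ** P i = P i"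
    and P_orth: "\<forall>i\<le>dd. \<forall>k\<le>dd. i \<noteq> k \<longrightarrow> P i ** P k = 0"
    and P_nz: "\<forall>i\<le>dd. P i \<noteq> 0"
    and P_sum: "(\<Sum>i\<le>dd. P i) = mat 1"
    and j: "1 \<le> j" "j \<le> m"
    and H0_sa: "madj H0 = H0"
    and Hk_sa: "\<forall>k\<in>{1..m}. madj (Hk k) = Hk k"
    and H0_bd: "\<forall>i\<le>dd. P i ** H0 = H0 ** P i"
    and Hj_bd: "\<forall>i\<le>dd. P i ** Hk j = Hk j ** P i"
    and Lj_bd: "\<forall>i\<le>dd. P i ** Lk j = Lk j ** P i"
    and Cj: "Ck j = (\<Sum>i\<le>dd. cmult (c i) (P i))"
    and Dj: "Dk j = (\<Sum>i\<le>dd. cmult (a i) (P i))"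
    and cl_def: "cl = Min ((\<lambda>i. (Re (c i) - Re (c 0))\<^sup>2) ` {1..dd})"
    and al_def: "al = Min ((\<lambda>i. (cmod (a i) - cmod (a 0))\<^sup>2) ` {1..dd})"
    and pos: "cl > 0 \<or> al > 0"
    and d0_def: "\<And>\<rho>. d0 \<rho> = N (\<rho> - P 0 ** \<rho> ** P 0)"
    and V_def: "\<And>\<rho>. V \<rho> = (\<Sum>i\<in>{1..dd}. sqrt (Re (mtr (P i ** \<rho>))))"
  shows
    "(\<exists>c1 c2. 0 < c1 \<and> 0 < c2 \<and>
        (\<forall>\<rho>. is_density \<rho> \<longrightarrow> d0 \<rho> / c2 \<le> V \<rho> \<and> V \<rho> \<le> sqrt (d0 \<rho> / c1)))
     \<and> (\<exists>rb>0. \<forall>l. 0 < l \<and> l < rb \<longrightarrow>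
          (\<exists>cL. 0 < cL \<and> cL < (cl + al) / 2 \<and>
             (\<forall>\<rho>. is_density \<rho> \<and> d0 \<rho> < l \<longrightarrow>
                gen H0 (Hk j) (Lk j) (Ck j) (Dk j) V \<rho> \<le> - cL * V \<rho>)))
     \<and> (\<exists>\<mu>1 \<mu>2 \<nu> l. classK \<mu>1 \<and> classK \<mu>2 \<and> classK \<nu> \<and> 0 < l \<and>
          (\<forall>\<rho>\<in>closure {\<sigma>. is_density \<sigma> \<and> d0 \<sigma> < l}.
             \<mu>1 (d0 \<rho>) \<le> V \<rho> \<and> V \<rho> \<le> \<mu>2 (d0 \<rho>) \<and>
             gen H0 (Hk j) (Lk j) (Ck j) (Dk j) V \<rho> \<le> - \<nu> (d0 \<rho>)))"
proof -
  interpret normed_resolution P dd N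
    by unfold_locales (use norm P_herm P_idem P_orth P_sum in auto)
  have V_eq: "V = lyap" and d0_eq: "d0 = dist0"
    using V_def d0_def by auto
  have cl: "\<forall>i\<in>{1..dd}. cl \<le> (Re (c i) - Re (c 0))\<^sup>2"
    and al: "\<forall>i\<in>{1..dd}. al \<le> (cmod (a i) - cmod (a 0))\<^sup>2"
    unfolding cl_def al_def by (auto intro: Min_le)
  have "0 \<le> cl" "0 \<le> al"
    unfolding cl_def al_def using dd_pos by (auto simp: Min_ge_iff)
  then have "0 < cl + al"
    using pos by linarith
  obtain c1 c2 where c: "0 < c1" "0 < c2"
    and comparison: "\<forall>\<rho>. is_density \<rho> \<longrightarrow> d0 \<rho> / c2 \<le> V \<rho> \<and> V \<rho> \<le> sqrt (d0 \<rho> / c1)"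
    unfolding V_eq d0_eq using lyap_comparison by blast
  obtain r where "0 < r" and decay: "\<forall>\<rho>. is_density \<rho> \<and> d0 \<rho> \<le> r \<longrightarrow>
      gen H0 (Hk j) (Lk j) (Ck j) (Dk j) V \<rho> \<le> - ((cl + al) / 8) * V \<rho>"
    unfolding V_eq d0_eq Cj Dj
    using gen_lyap_decay_near_support[OF H0_bd Hj_bd Lj_bd cl al \<open>0 < cl + al\<close>] by blast
  have "\<exists>rb>0. \<forall>l. 0 < l \<and> l < rb \<longrightarrow> (\<exists>cL. 0 < cL \<and> cL < (cl + al) / 2 \<and>
      (\<forall>\<rho>. is_density \<rho> \<and> d0 \<rho> < l \<longrightarrow> gen H0 (Hk j) (Lk j) (Ck j) (Dk j) V \<rho> \<le> - cL * V \<rho>))"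
    using \<open>0 < r\<close> \<open>0 < cl + al\<close> decay by (intro exI[of _ r]) (auto intro!: exI[of _ "(cl + al) / 8"])
  moreover have "continuous_on UNIV d0"
    unfolding d0_eq by (rule continuous_on_dist0)
  ultimately show ?thesis
    using c comparison \<open>0 < r\<close> \<open>0 < cl + al\<close> decay
      classK_bounds_of_decay[OF closed_density, of d0 c1 c2 "(cl + al) / 8" r V]
    by auto
qed

end
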